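(* Fix a training step $t$ and an unlabeled mini-batch $x_1^u,\dots,x_{B^u}^u$. Assume: (i) the gradient $\nabla_\theta G$ of the labeled loss $G$ is Lipschitz-continuous with Lipschitz constant $L_0$; (ii) $\|J_\theta f(x_i^u;\theta)\|\le M$ for every unlabeled example $x_i^u$ and every $\theta$. View the labeled loss after the inner step as a function of the pseudo labels, $H(\tilde y)=G(\tilde\theta_{t+1}(\tilde y))$. Then $\nabla_{\tilde y}H$ is Lipschitz-continuous, and its Lipschitz constant $L_t$ satisfies $L_t\le 4\alpha_t^2M^2L_0$. That is, $$\|\nabla_{\tilde y}H(\tilde y^1)-\nabla_{\tilde y}H(\tilde y^2)\|\le 4\alpha_t^2M^2L_0\,\|\tilde y^1-\tilde y^2\|\quad\text{for all }\tilde y^1,\tilde y^2.$$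
   Context: **Model and data.** Let $f(x;\theta)\in\mathbb{R}^C$ be a classifier, continuously differentiable in the parameter $\theta\in\mathbb{R}^d$. The labeled data are $\{(x_k^l,y_k)\}_{k=1}^{N^l}$ and the unlabeled data are $\mathcal D^u=\{x_i^u\}_{i=1}^{N^u}$. Write $J_\theta f(x;\theta)\in\mathbb{R}^{C\times d}$ for the Jacobian of $f$ in $\theta$, with $\|\cdot\|$ the operator norm. **Losses.** The loss of a pair is $\mathcal L(x,y;\theta)=\|f(x;\theta)-y\|_2^2$ (squared error). The labeled loss over the full labeled set is $$G(\theta)=\frac{1}{N^l}\sum_{k=1}^{N^l}\mathcal L(x_k^l,y_k;\theta).$$ **One inner step.** At step $t$ the current parameter is $\theta_t$, the learning rate is $\alpha_t>0$, and an unlabeled mini-batch $x_1^u,\dots,x_{B^u}^u$ is chosen. For pseudo labels $\tilde y=(\tilde y_1,\dots,\tilde y_{B^u})\in(\mathbb{R}^C)^{B^u}$, regarded as a single vector, define the one-step updated parameter $$\tilde\theta_{t+1}(\tilde y)=\theta_t-\frac{\alpha_t}{B^u}\sum_{i=1}^{B^u}\nabla_\theta\mathcal L(x_i^u,\tilde y_i;\theta_t).$$ *)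

theory Defs
  imports "HOL-Analysis.Analysis"
begin

definition grad :: "('a::real_inner \<Rightarrow> real) \<Rightarrow> 'a \<Rightarrow> 'a" where
  "grad F x = (THE g. (F has_derivative (\<lambda>h. g \<bullet> h)) (at x))"

definition sq_loss :: "('x \<Rightarrow> real^'d \<Rightarrow> real^'c) \<Rightarrow> 'x \<Rightarrow> real^'c \<Rightarrow> real^'d \<Rightarrow> real" where
  "sq_loss f x y \<theta> = (norm (f x \<theta> - y))\<^sup>2"

definition labeled_loss :: "('x \<Rightarrow> real^'d \<Rightarrow> real^'c) \<Rightarrow> nat \<Rightarrow> (nat \<Rightarrow> 'x) \<Rightarrow> (nat \<Rightarrow> real^'c)
    \<Rightarrow> real^'d \<Rightarrow> real" where
  "labeled_loss f Nl xl yl \<theta> = (1 / real Nl) * (\<Sum>k<Nl. sq_loss f (xl k) (yl k) \<theta>)"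

text \<open>One inner step; the mini-batch is indexed by the finite type 'b, so B^u = CARD('b);
  pseudo labels are one vector in (R^C)^(B^u).\<close>
definition inner_step :: "('x \<Rightarrow> real^'d \<Rightarrow> real^'c) \<Rightarrow> real \<Rightarrow> real^'d \<Rightarrow> ('b::finite \<Rightarrow> 'x)
    \<Rightarrow> real^'c^'b \<Rightarrow> real^'d" where
  "inner_step f \<alpha> \<theta>t xu ty = \<theta>t - (\<alpha> / real CARD('b)) *\<^sub>R
      (\<Sum>i\<in>UNIV. grad (\<lambda>\<theta>. sq_loss f (xu i) (ty $ i) \<theta>) \<theta>t)"

end

theory Submission imports Defs begin

text \<open>For squared error the gradient of each unlabeled loss at \<open>\<theta>t\<close> is
  \<open>2 J\<^sub>i\<^sup>T (f(x\<^sub>i) - y\<^sub>i)\<close>, so the inner step is affine in the pseudo labels: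
  \<open>\<theta>(y) = c + A y\<close> with \<open>A y = (2\<alpha>/B) \<Sum>\<^sub>i J\<^sub>i\<^sup>T y\<^sub>i\<close>. By the chain rule
  \<open>\<nabla>H(y) = A\<^sup>T \<nabla>G(c + A y)\<close>. Since \<open>\<parallel>J\<^sub>i\<^sup>T\<parallel> \<le> M\<close> we get \<open>\<parallel>A\<parallel> = \<parallel>A\<^sup>T\<parallel> \<le> 2\<alpha>M\<close>, and
  sandwiching the Lipschitz bound of \<open>\<nabla>G\<close> between \<open>A\<close> and \<open>A\<^sup>T\<close> gives \<open>(2\<alpha>M)\<^sup>2 L\<^sub>0\<close>.\<close>

lemma grad_eqI:
  fixes F :: "'a::real_inner \<Rightarrow> real"
  assumes "(F has_derivative (\<lambda>h. g \<bullet> h)) (at x)"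
  shows "grad F x = g"
  unfolding grad_def
proof (rule the_equality)
  fix g' assume "(F has_derivative (\<lambda>h. g' \<bullet> h)) (at x)"
  from has_derivative_unique[OF this assms]
  have "(g' - g) \<bullet> (g' - g) = 0" by (metis inner_diff_left right_minus_eq)
  then show "g' = g" by simp
qed (rule assms)

lemma has_derivative_grad:
  fixes F :: "'a::real_inner \<Rightarrow> real"
  assumes "(F has_derivative (\<lambda>h. g \<bullet> h)) (at x)"
  shows "(F has_derivative (\<lambda>h. grad F x \<bullet> h)) (at x)"
  using assms by (simp add: grad_eqI)

lemma lipschitz_constant_nonneg:
  fixes g :: "'a::euclidean_space \<Rightarrow> 'b::real_normed_vector"
  assumes "\<And>x y. norm (g x - g y) \<le> L * norm (x - y)"
  shows "L \<ge> 0"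
proof -
  obtain b :: 'a where "b \<in> Basis" using nonempty_Basis by blast
  then have "norm (0 - b) > 0" by (auto simp: nonzero_Basis)
  moreover have "0 \<le> L * norm (0 - b)" using assms[of 0 b] norm_ge_zero order.trans by blast
  ultimately show ?thesis by (simp add: zero_le_mult_iff)
qed

lemma norm_adjoint_le:
  fixes A :: "'n::euclidean_space \<Rightarrow> 'm::euclidean_space"
  assumes lin: "linear A" and K0: "K \<ge> 0" and K: "\<And>x. norm (A x) \<le> K * norm x"
  shows "norm (adjoint A z) \<le> K * norm z"
proof -
  let ?w = "adjoint A z"
  have "norm ?w ^ 2 = A ?w \<bullet> z" by (simp add: adjoint_works[OF lin] power2_norm_eq_inner)
  also have "\<dots> \<le> norm (A ?w) * norm z" by (rule norm_cauchy_schwarz)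
  also have "\<dots> \<le> K * norm ?w * norm z" by (simp add: K mult_right_mono)
  finally have "norm ?w * norm ?w \<le> (K * norm z) * norm ?w"
    by (simp add: power2_eq_square algebra_simps)
  then show ?thesis
    using K0 by (cases "norm ?w = 0") (simp_all add: mult_le_cancel_right_pos)
qed

lemma has_derivative_comp_affine:
  fixes F :: "'n::euclidean_space \<Rightarrow> real" and A :: "'m::euclidean_space \<Rightarrow> 'n"
  assumes F: "\<And>x. (F has_derivative (\<lambda>h. grad F x \<bullet> h)) (at x)" and lin: "linear A"
  shows "((\<lambda>y. F (c + A y)) has_derivative (\<lambda>h. adjoint A (grad F (c + A y)) \<bullet> h)) (at y)"
proof -
  have "((\<lambda>y. c + A y) has_derivative A) (at y)"
    using has_derivative_add[OF has_derivative_const linear_imp_has_derivative[OF lin]] by simp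
  from diff_chain_at[OF this F]
  have "((\<lambda>y. F (c + A y)) has_derivative (\<lambda>h. grad F (c + A y) \<bullet> A h)) (at y)"
    by (simp add: o_def)
  then show ?thesis by (simp add: adjoint_clauses[OF lin] inner_commute)
qed

lemma grad_comp_affine:
  fixes F :: "'n::euclidean_space \<Rightarrow> real" and A :: "'m::euclidean_space \<Rightarrow> 'n"
  assumes "\<And>x. (F has_derivative (\<lambda>h. grad F x \<bullet> h)) (at x)" and "linear A"
  shows "grad (\<lambda>y. F (c + A y)) y = adjoint A (grad F (c + A y))"
  by (rule grad_eqI[OF has_derivative_comp_affine[OF assms]])

lemma lipschitz_grad_comp_affine:
  fixes F :: "'n::euclidean_space \<Rightarrow> real" and A :: "'m::euclidean_space \<Rightarrow> 'n"
  assumes F: "\<And>x. (F has_derivative (\<lambda>h. grad F x \<bullet> h)) (at x)"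
    and lip: "\<And>x1 x2. norm (grad F x1 - grad F x2) \<le> L * norm (x1 - x2)"
    and lin: "linear A" and K0: "K \<ge> 0" and K: "\<And>y. norm (A y) \<le> K * norm y"
  shows "norm (grad (\<lambda>y. F (c + A y)) y1 - grad (\<lambda>y. F (c + A y)) y2)
           \<le> K\<^sup>2 * L * norm (y1 - y2)"
proof -
  have L0: "L \<ge> 0" by (rule lipschitz_constant_nonneg[OF lip])
  have "norm (grad (\<lambda>y. F (c + A y)) y1 - grad (\<lambda>y. F (c + A y)) y2)
      = norm (adjoint A (grad F (c + A y1) - grad F (c + A y2)))"
    by (simp add: grad_comp_affine[OF F lin] linear_diff[OF adjoint_linear[OF lin]])
  also have "\<dots> \<le> K * norm (grad F (c + A y1) - grad F (c + A y2))"
    by (rule norm_adjoint_le[OF lin K0 K])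
  also have "\<dots> \<le> K * (L * norm (A (y1 - y2)))"
    using lip[of "c + A y1" "c + A y2"] K0 by (simp add: linear_diff[OF lin] mult_left_mono)
  also have "\<dots> \<le> K * (L * (K * norm (y1 - y2)))"
    by (intro mult_left_mono K K0 L0)
  finally show ?thesis by (simp add: power2_eq_square mult.assoc mult.left_commute)
qed

lemma has_derivative_sq_loss:
  fixes f :: "'x \<Rightarrow> real^'d \<Rightarrow> real^'c"
  assumes "(f x has_derivative blinfun_apply J) (at \<theta>)"
  shows "(sq_loss f x y has_derivative (\<lambda>h. (2 *\<^sub>R adjoint J (f x \<theta> - y)) \<bullet> h)) (at \<theta>)"
proof -
  have lin: "linear (blinfun_apply J)" by (simp add: blinfun.bounded_linear_right bounded_linear.linear)
  have "((\<lambda>\<theta>. (f x \<theta> - y) \<bullet> (f x \<theta> - y)) has_derivative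
      (\<lambda>h. (f x \<theta> - y) \<bullet> (J h - 0) + (J h - 0) \<bullet> (f x \<theta> - y))) (at \<theta>)"
    by (intro has_derivative_inner has_derivative_diff assms has_derivative_const)
  moreover have "sq_loss f x y = (\<lambda>\<theta>. (f x \<theta> - y) \<bullet> (f x \<theta> - y))"
    by (simp add: fun_eq_iff sq_loss_def power2_norm_eq_inner)
  ultimately show ?thesis
    by (simp add: adjoint_clauses[OF lin] inner_commute)
qed

lemma has_derivative_labeled_loss:
  fixes f :: "'x \<Rightarrow> real^'d \<Rightarrow> real^'c"
  assumes "\<And>x \<theta>. (f x has_derivative blinfun_apply (Jf x \<theta>)) (at \<theta>)"
  shows "(labeled_loss f Nl xl yl has_derivative (\<lambda>h. grad (labeled_loss f Nl xl yl) \<theta> \<bullet> h)) (at \<theta>)"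
proof (rule has_derivative_grad)
  let ?g = "\<lambda>k. 2 *\<^sub>R adjoint (Jf (xl k) \<theta>) (f (xl k) \<theta> - yl k)"
  have "(labeled_loss f Nl xl yl has_derivative
      (\<lambda>h. (1 / real Nl) * (\<Sum>k<Nl. ?g k \<bullet> h))) (at \<theta>)"
    unfolding labeled_loss_def
    by (intro has_derivative_mult_right has_derivative_sum has_derivative_sq_loss assms)
  then show "(labeled_loss f Nl xl yl has_derivative
      (\<lambda>h. ((1 / real Nl) *\<^sub>R (\<Sum>k<Nl. ?g k)) \<bullet> h)) (at \<theta>)"
    by (simp add: inner_sum_left)
qed

definition batch_adjoint :: "('b::finite \<Rightarrow> 'n::euclidean_space \<Rightarrow> 'm::euclidean_space) \<Rightarrow> 'm^'b \<Rightarrow> 'n"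
  where "batch_adjoint J y = (\<Sum>i\<in>UNIV. adjoint (J i) (y $ i))"

lemma linear_batch_adjoint:
  assumes "\<And>i. linear (J i)"
  shows "linear (batch_adjoint J)"
proof
  have lin: "linear (adjoint (J i))" for i by (rule adjoint_linear[OF assms])
  show "batch_adjoint J (x + y) = batch_adjoint J x + batch_adjoint J y" for x y
    by (simp add: batch_adjoint_def linear_add[OF lin] sum.distrib)
  show "batch_adjoint J (r *\<^sub>R x) = r *\<^sub>R batch_adjoint J x" for r x
    by (simp add: batch_adjoint_def linear_scale[OF lin] scaleR_sum_right)
qed

lemma norm_batch_adjoint_le:
  fixes J :: "'b::finite \<Rightarrow> 'n::euclidean_space \<Rightarrow> 'm::euclidean_space"
  assumes lin: "\<And>i. linear (J i)" and M0: "M \<ge> 0" and M: "\<And>i x. norm (J i x) \<le> M * norm x"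
  shows "norm (batch_adjoint J y) \<le> real CARD('b) * M * norm y"
proof -
  have "norm (batch_adjoint J y) \<le> (\<Sum>i\<in>(UNIV::'b set). M * norm y)"
    unfolding batch_adjoint_def
  proof (rule order.trans[OF norm_sum sum_mono])
    fix i
    show "norm (adjoint (J i) (y $ i)) \<le> M * norm y"
      using norm_adjoint_le[OF lin M0 M, of i "y $ i"] Finite_Cartesian_Product.norm_nth_le[of y i] M0
      by (meson mult_left_mono order.trans)
  qed
  then show ?thesis by simp
qed

lemma inner_step_affine:
  fixes f :: "'x \<Rightarrow> real^'d \<Rightarrow> real^'c" and xu :: "'b::finite \<Rightarrow> 'x"
  assumes "\<And>x \<theta>. (f x has_derivative blinfun_apply (Jf x \<theta>)) (at \<theta>)"
  shows "inner_step f \<alpha> \<theta>t xu y = inner_step f \<alpha> \<theta>t xu 0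
           + (2 * \<alpha> / real CARD('b)) *\<^sub>R batch_adjoint (\<lambda>i. blinfun_apply (Jf (xu i) \<theta>t)) y"
proof -
  have lin: "linear (adjoint (blinfun_apply (Jf (xu i) \<theta>t)))" for i
    by (simp add: adjoint_linear blinfun.bounded_linear_right bounded_linear.linear)
  have "grad (sq_loss f (xu i) z) \<theta>t = 2 *\<^sub>R adjoint (Jf (xu i) \<theta>t) (f (xu i) \<theta>t - z)" for i z
    by (rule grad_eqI[OF has_derivative_sq_loss[OF assms]])
  then show ?thesis
    unfolding inner_step_def batch_adjoint_def
    by (simp add: linear_diff[OF lin] linear_0[OF lin] sum_subtractf scaleR_diff_right
        mult.commute[of \<alpha>] flip: scaleR_sum_right)
qed

theorem lemma1:
  fixes f :: "'x \<Rightarrow> real^'d \<Rightarrow> real^'c"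
    and Jf :: "'x \<Rightarrow> real^'d \<Rightarrow> ((real^'d) \<Rightarrow>\<^sub>L (real^'c))"
    and Nl :: nat and xl :: "nat \<Rightarrow> 'x" and yl :: "nat \<Rightarrow> real^'c"
    and xu :: "'b::finite \<Rightarrow> 'x"
    and \<theta>t :: "real^'d"
    and \<alpha> L0 M :: real
  assumes deriv: "\<And>x \<theta>. (f x has_derivative blinfun_apply (Jf x \<theta>)) (at \<theta>)"
    and cont_deriv: "\<And>x. continuous_on UNIV (Jf x)"
    and alpha_pos: "\<alpha> > 0"
    and lip_G: "\<And>\<theta>1 \<theta>2. norm (grad (labeled_loss f Nl xl yl) \<theta>1 - grad (labeled_loss f Nl xl yl) \<theta>2)
                        \<le> L0 * norm (\<theta>1 - \<theta>2)"
    and jac_bound: "\<And>i \<theta>. norm (Jf (xu i) \<theta>) \<le> M"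
  shows "(\<forall>ty. ((\<lambda>y. labeled_loss f Nl xl yl (inner_step f \<alpha> \<theta>t xu y)) has_derivative
              (\<lambda>h. grad (\<lambda>y. labeled_loss f Nl xl yl (inner_step f \<alpha> \<theta>t xu y)) ty \<bullet> h)) (at ty))
       \<and> (\<forall>ty1 ty2.
           norm (grad (\<lambda>y. labeled_loss f Nl xl yl (inner_step f \<alpha> \<theta>t xu y)) ty1
               - grad (\<lambda>y. labeled_loss f Nl xl yl (inner_step f \<alpha> \<theta>t xu y)) ty2)
           \<le> 4 * \<alpha>\<^sup>2 * M\<^sup>2 * L0 * norm (ty1 - ty2))"
proof -
  define J where "J i = blinfun_apply (Jf (xu i) \<theta>t)" for i
  define A where "A y = (2 * \<alpha> / real CARD('b)) *\<^sub>R batch_adjoint J y" for y :: "real^'c^'b"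
  have linJ: "linear (J i)" for i by (simp add: J_def blinfun.bounded_linear_right bounded_linear.linear)
  have M0: "M \<ge> 0" using jac_bound[of undefined \<theta>t] norm_ge_zero order.trans by blast
  have J_bound: "norm (J i x) \<le> M * norm x" for i x
    unfolding J_def by (meson jac_bound mult_right_mono norm_blinfun norm_ge_zero order.trans)
  have A_bound: "norm (A y) \<le> (2 * \<alpha> * M) * norm y" for y
  proof -
    have "norm (A y) = 2 * \<alpha> / real CARD('b) * norm (batch_adjoint J y)"
      using alpha_pos by (simp add: A_def)
    also have "\<dots> \<le> 2 * \<alpha> / real CARD('b) * (real CARD('b) * M * norm y)"
      using norm_batch_adjoint_le[of J, OF linJ M0 J_bound] alpha_pos
      by (intro mult_left_mono) simp_all
    finally show ?thesis by simp
  qed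
  have linA: "linear A"
    unfolding A_def by (intro linear_compose_scale_right linear_batch_adjoint linJ)
  have H_affine: "(\<lambda>y. labeled_loss f Nl xl yl (inner_step f \<alpha> \<theta>t xu y))
      = (\<lambda>y. labeled_loss f Nl xl yl (inner_step f \<alpha> \<theta>t xu 0 + A y))"
    unfolding A_def J_def[abs_def] by (subst inner_step_affine[OF deriv]) (rule refl)
  note G_deriv = has_derivative_labeled_loss[where f = f and Nl = Nl and xl = xl and yl = yl, OF deriv]
  have K0: "2 * \<alpha> * M \<ge> 0" using alpha_pos M0 by simp
  have K_sq: "(2 * \<alpha> * M)\<^sup>2 * L0 = 4 * \<alpha>\<^sup>2 * M\<^sup>2 * L0" by (simp add: power_mult_distrib)
  show ?thesis
    unfolding H_affine
    using has_derivative_grad[OF has_derivative_comp_affine[OF G_deriv linA]]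
      lipschitz_grad_comp_affine[OF G_deriv lip_G linA K0 A_bound, unfolded K_sq]
    by blast
qed

end
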